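(* For $k\geq 1$ define the formal power series $$\psi_k(t)=\mu(k)\,(z_2;q)_k\sum_{j=k}^{\infty}\frac{(q^{j-k+1};q)_k}{(q^jz_2;q)_k}\,t^j,\qquad \mu(k)=(-1)^k\frac{q^{\binom{k}{2}}}{(q;q)_k}\,\frac{1-q^{2k-1}z_2}{1-q^{k-1}z_2},$$ and let $f_k(t)=\sum_{j\geq k}\rho(k,j)t^j$ for $k\geq 0$, where $\rho(k,j)=m_j/v'_{j+1}(x_k)$. Then for every $k\geq 1$, $f_k(t)$ is the Hadamard (coefficientwise) product of $f_0(t)$ and $\psi_k(t)$, i.e. $\rho(k,j)$ equals $\rho(0,j)$ times the coefficient of $t^j$ in $\psi_k(t)$, for all $j\geq k$.
   Context: Fix $q\in\mathbb{C}$ with $q\neq 0$ and $|q|\neq 1$. Fix complex parameters $a_1,a_2,b_0,b_1,b_2,s_1,s_2$ with $a_2\neq0$, $b_2\neq0$, put $s_0=-s_1-s_2$, and for $k\geq 0$ define $x_k=b_0+b_1q^k+b_2q^{-k}$, $h_k=a_1q^k+a_2q^{-k}$, $d_k=s_0+s_1q^k+s_2q^{-k}$; assume the $h_k$ are pairwise distinct and the $x_k$ are pairwise distinct. Let $g_0=0$ and $g_k=x_{k-1}(h_k-h_0)+d_k$ for $k\geq 1$. Let $v_n(t)=\prod_{i=0}^{n-1}(t-x_i)$, so $v_{j+1}'(x_k)=\prod_{i=0,\,i\neq k}^{j}(x_k-x_i)$. Define $m_0=1$, $m_j=\prod_{i=1}^{j}\frac{g_i}{h_0-h_i}$. Put $z_2=qb_1/b_2$.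 $(t;q)_k=\prod_{i=0}^{k-1}(1-q^it)$. *)

theory Defs
  imports Complex_Main "HOL-Computational_Algebra.Formal_Power_Series"
begin

definition qpoch :: "complex \<Rightarrow> complex \<Rightarrow> nat \<Rightarrow> complex" where
  "qpoch t q k = (\<Prod>i<k. 1 - q ^ i * t)"

definition xx :: "complex \<Rightarrow> complex \<Rightarrow> complex \<Rightarrow> complex \<Rightarrow> nat \<Rightarrow> complex" where
  "xx q b0 b1 b2 k = b0 + b1 * q ^ k + b2 * inverse (q ^ k)"

definition hh :: "complex \<Rightarrow> complex \<Rightarrow> complex \<Rightarrow> nat \<Rightarrow> complex" where
  "hh q a1 a2 k = a1 * q ^ k + a2 * inverse (q ^ k)"

definition dd :: "complex \<Rightarrow> complex \<Rightarrow> complex \<Rightarrow> nat \<Rightarrow> complex" where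
  "dd q s1 s2 k = (- s1 - s2) + s1 * q ^ k + s2 * inverse (q ^ k)"

definition gg :: "complex \<Rightarrow> complex \<Rightarrow> complex \<Rightarrow> complex \<Rightarrow> complex \<Rightarrow> complex
    \<Rightarrow> complex \<Rightarrow> complex \<Rightarrow> nat \<Rightarrow> complex" where
  "gg q a1 a2 b0 b1 b2 s1 s2 k =
     (if k = 0 then 0
      else xx q b0 b1 b2 (k - 1) * (hh q a1 a2 k - hh q a1 a2 0) + dd q s1 s2 k)"

definition mm :: "complex \<Rightarrow> complex \<Rightarrow> complex \<Rightarrow> complex \<Rightarrow> complex \<Rightarrow> complex
    \<Rightarrow> complex \<Rightarrow> complex \<Rightarrow> nat \<Rightarrow> complex" where
  "mm q a1 a2 b0 b1 b2 s1 s2 j =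
     (\<Prod>i\<in>{1..j}. gg q a1 a2 b0 b1 b2 s1 s2 i / (hh q a1 a2 0 - hh q a1 a2 i))"

text \<open>v'_{j+1}(x_k) = prod_{i=0, i~=k}^j (x_k - x_i)\<close>
definition vder :: "complex \<Rightarrow> complex \<Rightarrow> complex \<Rightarrow> complex \<Rightarrow> nat \<Rightarrow> nat \<Rightarrow> complex" where
  "vder q b0 b1 b2 j k = (\<Prod>i\<in>{0..j} - {k}. xx q b0 b1 b2 k - xx q b0 b1 b2 i)"

definition rho :: "complex \<Rightarrow> complex \<Rightarrow> complex \<Rightarrow> complex \<Rightarrow> complex \<Rightarrow> complex
    \<Rightarrow> complex \<Rightarrow> complex \<Rightarrow> nat \<Rightarrow> nat \<Rightarrow> complex" where
  "rho q a1 a2 b0 b1 b2 s1 s2 k j =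
     mm q a1 a2 b0 b1 b2 s1 s2 j / vder q b0 b1 b2 j k"

definition ff :: "complex \<Rightarrow> complex \<Rightarrow> complex \<Rightarrow> complex \<Rightarrow> complex \<Rightarrow> complex
    \<Rightarrow> complex \<Rightarrow> complex \<Rightarrow> nat \<Rightarrow> complex fps" where
  "ff q a1 a2 b0 b1 b2 s1 s2 k =
     Abs_fps (\<lambda>j. if k \<le> j then rho q a1 a2 b0 b1 b2 s1 s2 k j else 0)"

definition mu :: "complex \<Rightarrow> complex \<Rightarrow> nat \<Rightarrow> complex" where
  "mu q z2 k = (-1) ^ k * q ^ (k choose 2) / qpoch q q k *
               ((1 - q ^ (2 * k - 1) * z2) / (1 - q ^ (k - 1) * z2))"

definition psi :: "complex \<Rightarrow> complex \<Rightarrow> nat \<Rightarrow> complex fps" where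
  "psi q z2 k = Abs_fps (\<lambda>j. if k \<le> j then
       mu q z2 k * qpoch z2 q k * (qpoch (q ^ (j - k + 1)) q k / qpoch (q ^ j * z2) q k)
     else 0)"

definition hadamard :: "'a::times fps \<Rightarrow> 'a fps \<Rightarrow> 'a fps" where
  "hadamard f g = Abs_fps (\<lambda>j. fps_nth f j * fps_nth g j)"

end

theory Submission
  imports Defs
begin

text \<open>Since rho(k,j) = m_j / v'_{j+1}(x_k), the factor m_j cancels and it suffices that the
  coefficient of t^j in psi_k is v'_{j+1}(x_0) / v'_{j+1}(x_k) for j \<ge> k. With z = q b1 / b2 every node difference factors as
  x_a - x_{n+1} = -b2 (1 - q^{n+1-a}) (1 - q^{n+a} z) / q^{n+1}, so both sides are quotients of
  q-Pochhammer symbols. They agree at j = k, and passing from j to j + 1 multiplies both by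
  (1 - q^{j+1}) (1 - q^j z) / ((1 - q^{j+1-k}) (1 - q^{j+k} z)). Injectivity of x alone keeps all
  these factors nonzero.\<close>

lemma qpoch_Suc: "qpoch t q (Suc n) = qpoch t q n * (1 - q ^ n * t)"
  by (simp add: qpoch_def)

lemma qpoch_shift: "qpoch t q n * (1 - q ^ n * t) = (1 - t) * qpoch (q * t) q n"
proof (induction n)
  case (Suc n)
  have "qpoch t q (Suc n) * (1 - q ^ Suc n * t) = qpoch t q n * (1 - q ^ n * t) * (1 - q ^ n * (q * t))"
    by (simp add: qpoch_Suc mult_ac)
  with Suc show ?case by (simp add: qpoch_Suc)
qed (simp add: qpoch_def)

lemma qpoch_eq_0_iff: "qpoch t q n = 0 \<longleftrightarrow> (\<exists>i<n. q ^ i * t = 1)"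
  by (auto simp: qpoch_def)

lemma prod_power_lessThan: "(\<Prod>i<n. x ^ i) = x ^ (n choose 2)"
  for x :: "'a::comm_monoid_mult"
proof (induction n)
  case (Suc n)
  have "Suc n choose 2 = (n choose 2) + n"
    using binomial_Suc_Suc[of n 1] by (simp add: numeral_2_eq_2)
  with Suc show ?case by (simp add: power_add)
qed (simp add: binomial_eq_0)

lemma square_eq_add_choose_two: "n * n = n + 2 * (n choose 2)"
  by (simp add: choose_two) (cases n; simp)

definition psi_coeff :: "complex \<Rightarrow> complex \<Rightarrow> nat \<Rightarrow> nat \<Rightarrow> complex" where
  "psi_coeff q z k j =
     mu q z k * qpoch z q k * (qpoch (q ^ (j - k + 1)) q k / qpoch (q ^ j * z) q k)"

lemma fps_nth_psi: "fps_nth (psi q z k) j = (if k \<le> j then psi_coeff q z k j else 0)"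
  by (simp add: psi_def psi_coeff_def)

lemma psi_coeff_Suc:
  assumes "k \<le> j" "qpoch (q ^ j * z) q k \<noteq> 0" "qpoch (q ^ Suc j * z) q k \<noteq> 0"
  shows "psi_coeff q z k (Suc j) * ((1 - q ^ (Suc j - k)) * (1 - q ^ (j + k) * z))
       = psi_coeff q z k j * ((1 - q ^ Suc j) * (1 - q ^ j * z))"
proof -
  have num: "qpoch (q ^ (Suc j - k + 1)) q k * (1 - q ^ (Suc j - k))
           = qpoch (q ^ (j - k + 1)) q k * (1 - q ^ Suc j)"
    using qpoch_shift[of "q ^ (j - k + 1)" q k] assms(1)
    by (simp add: Suc_diff_le power_add[symmetric] mult_ac)
  have den: "qpoch (q ^ j * z) q k * (1 - q ^ (j + k) * z) = (1 - q ^ j * z) * qpoch (q ^ Suc j * z) q k"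
    using qpoch_shift[of "q ^ j * z" q k] by (simp add: power_add mult_ac)
  have den': "(1 - q ^ (j + k) * z) / qpoch (q ^ Suc j * z) q k = (1 - q ^ j * z) / qpoch (q ^ j * z) q k"
    using den assms(2,3) by (simp add: frac_eq_eq mult.commute)
  have "psi_coeff q z k (Suc j) * ((1 - q ^ (Suc j - k)) * (1 - q ^ (j + k) * z))
      = mu q z k * qpoch z q k * (qpoch (q ^ (Suc j - k + 1)) q k * (1 - q ^ (Suc j - k)))
          * ((1 - q ^ (j + k) * z) / qpoch (q ^ Suc j * z) q k)"
    by (simp add: psi_coeff_def)
  also have "\<dots> = mu q z k * qpoch z q k * (qpoch (q ^ (j - k + 1)) q k * (1 - q ^ Suc j))
          * ((1 - q ^ j * z) / qpoch (q ^ j * z) q k)"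
    by (simp only: num den')
  also have "\<dots> = psi_coeff q z k j * ((1 - q ^ Suc j) * (1 - q ^ j * z))"
    by (simp add: psi_coeff_def)
  finally show ?thesis .
qed

lemma psi_coeff_diag_closed:
  assumes "qpoch q q (Suc k) \<noteq> 0" "qpoch (q ^ Suc k * z) q (Suc k) \<noteq> 0" "1 - q ^ k * z \<noteq> 0"
  shows "psi_coeff q z (Suc k) (Suc k)
       = (- 1) ^ Suc k * q ^ (Suc k choose 2) * qpoch z q (Suc k) / qpoch (q ^ k * z) q (Suc k)"
proof -
  let ?T = "q ^ Suc (2 * k) * z" and ?W = "qpoch (q ^ k * z) q (Suc k)"
    and ?W' = "qpoch (q ^ Suc k * z) q (Suc k)"
  have shift: "?W * (1 - ?T) = (1 - q ^ k * z) * ?W'"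
    using qpoch_shift[of "q ^ k * z" q "Suc k"] by (simp add: power_mult power2_eq_square mult_ac)
  then have "?W \<noteq> 0" using assms(2,3) by auto
  with shift assms(2,3) have ratio: "(1 - ?T) / ((1 - q ^ k * z) * ?W') = 1 / ?W"
    by (simp add: frac_eq_eq mult.commute)
  have "psi_coeff q z (Suc k) (Suc k)
      = (- 1) ^ Suc k * q ^ (Suc k choose 2) * qpoch z q (Suc k) * ((1 - ?T) / ((1 - q ^ k * z) * ?W'))"
    using assms(1) by (simp add: psi_coeff_def mu_def)
  then show ?thesis unfolding ratio by simp
qed

lemma xx_diff:
  assumes "q \<noteq> 0" "b2 \<noteq> 0" "a \<le> Suc n"
  shows "xx q b0 b1 b2 a - xx q b0 b1 b2 (Suc n)
       = - b2 * (1 - q ^ (Suc n - a)) * (1 - q ^ (n + a) * (q * b1 / b2)) / q ^ Suc n"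
proof -
  obtain d where d: "Suc n = a + d" using assms(3) le_Suc_ex by blast
  then have sd: "Suc n - a = d" by simp
  define A D where "A = q ^ a" and "D = q ^ d"
  have "A \<noteq> 0" "D \<noteq> 0" using assms(1) by (simp_all add: A_def D_def)
  have qSuc: "q ^ Suc n = A * D" by (simp add: A_def D_def d power_add)
  have "q ^ (n + a) * q = A * A * D"
  proof -
    have "Suc (n + a) = a + a + d" using d by simp
    then have "q ^ Suc (n + a) = A * A * D" by (simp only: power_add A_def D_def)
    then show ?thesis by (simp add: mult.commute)
  qed
  then have z: "q ^ (n + a) * (q * b1 / b2) = A * A * D * b1 / b2" by simp
  have "xx q b0 b1 b2 a - xx q b0 b1 b2 (Suc n) = b1 * A + b2 / A - (b1 * (A * D) + b2 / (A * D))"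
    unfolding xx_def qSuc by (simp add: A_def divide_inverse)
  also have "\<dots> = - b2 * (1 - D) * (1 - A * A * D * b1 / b2) / (A * D)"
    using \<open>A \<noteq> 0\<close> \<open>D \<noteq> 0\<close> assms(2) by (simp add: field_simps)
  also have "\<dots> = - b2 * (1 - q ^ (Suc n - a)) * (1 - q ^ (n + a) * (q * b1 / b2)) / q ^ Suc n"
    by (simp only: qSuc z D_def sd)
  finally show ?thesis .
qed

lemma vder_Suc:
  "k \<le> j \<Longrightarrow>
    vder q b0 b1 b2 (Suc j) k = vder q b0 b1 b2 j k * (xx q b0 b1 b2 k - xx q b0 b1 b2 (Suc j))"
  by (simp add: vder_def atLeast0_atMost_Suc insert_Diff_if mult.commute)

lemma vder_nonzero: "inj (xx q b0 b1 b2) \<Longrightarrow> vder q b0 b1 b2 j k \<noteq> 0"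
  by (auto simp: vder_def dest: injD)

context
  fixes q b0 b1 b2 :: complex
  assumes q_nonzero: "q \<noteq> 0" and b2_nonzero: "b2 \<noteq> 0" and xx_inj: "inj (xx q b0 b1 b2)"
begin

abbreviation (input) x where "x \<equiv> xx q b0 b1 b2"
abbreviation (input) z where "z \<equiv> q * b1 / b2"

lemma qpow_Suc_ne_1: "q ^ Suc n \<noteq> 1" and qpow_mult_z_ne_1: "q ^ n * z \<noteq> 1"
proof -
  have "x 0 - x (Suc n) \<noteq> 0" using xx_inj by (auto dest: injD)
  then show "q ^ Suc n \<noteq> 1" "q ^ n * z \<noteq> 1"
    using xx_diff[OF q_nonzero b2_nonzero, of 0 n] by auto
qed

lemma qpoch_qpow_nonzero: "qpoch (q ^ Suc a) q n \<noteq> 0"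
proof -
  have "q ^ i * q ^ Suc a \<noteq> 1" for i
    using qpow_Suc_ne_1[of "i + a"] by (simp add: power_add mult.left_commute)
  then show ?thesis by (simp add: qpoch_eq_0_iff)
qed

lemma qpoch_qpow_z_nonzero: "qpoch (q ^ a * z) q n \<noteq> 0"
proof -
  have "q ^ i * (q ^ a * z) \<noteq> 1" for i
    using qpow_mult_z_ne_1[of "i + a"] by (simp add: power_add mult.assoc)
  then show ?thesis by (simp add: qpoch_eq_0_iff)
qed

lemma vder_at_0:
  "vder q b0 b1 b2 k 0 = (- b2) ^ k * qpoch q q k * qpoch z q k / q ^ (k + (k choose 2))"
proof -
  have "{0..k} - {0} = {1..k}" by auto
  then have "vder q b0 b1 b2 k 0 = (\<Prod>m<k. x 0 - x (Suc m))"
    by (simp add: vder_def prod.atLeast1_atMost_eq)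
  also have "\<dots> = (\<Prod>m<k. (- b2) * (1 - q ^ Suc m) * (1 - q ^ m * z) / q ^ Suc m)"
    using xx_diff[OF q_nonzero b2_nonzero, of 0] by (simp only: le0 diff_zero add_0_right)
  also have "\<dots> = (- b2) ^ k * (\<Prod>m<k. 1 - q ^ Suc m) * qpoch z q k / (\<Prod>m<k. q ^ Suc m)"
    by (simp only: prod.distrib prod_dividef prod_constant card_lessThan qpoch_def)
  also have "(\<Prod>m<k. 1 - q ^ Suc m) = qpoch q q k"
    by (simp only: qpoch_def power_Suc2)
  also have "(\<Prod>m<k. q ^ Suc m) = q ^ (k + (k choose 2))"
    by (simp add: prod.distrib prod_power_lessThan power_add)
  finally show ?thesis .
qed

lemma vder_diag:
  "vder q b0 b1 b2 (Suc k) (Suc k)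
     = b2 ^ Suc k * qpoch q q (Suc k) * qpoch (q ^ k * z) q (Suc k) / q ^ (Suc k * Suc k)"
proof -
  have "{0..Suc k} - {Suc k} = {..<Suc k}" by auto
  then have "vder q b0 b1 b2 (Suc k) (Suc k) = (\<Prod>i<Suc k. x (Suc k) - x i)"
    by (simp add: vder_def)
  also have "\<dots> = (\<Prod>i<Suc k. b2 * (1 - q ^ (Suc k - i)) * (1 - q ^ i * (q ^ k * z)) / q ^ Suc k)"
  proof (rule prod.cong[OF refl])
    fix i assume "i \<in> {..<Suc k}"
    then have "x i - x (Suc k) = - b2 * (1 - q ^ (Suc k - i)) * (1 - q ^ (k + i) * z) / q ^ Suc k"
      by (intro xx_diff[OF q_nonzero b2_nonzero]) simp
    then have "x (Suc k) - x i = b2 * (1 - q ^ (Suc k - i)) * (1 - q ^ (k + i) * z) / q ^ Suc k"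
      by (metis minus_diff_eq minus_divide_left mult_minus_left minus_minus)
    then show "x (Suc k) - x i = b2 * (1 - q ^ (Suc k - i)) * (1 - q ^ i * (q ^ k * z)) / q ^ Suc k"
      by (simp add: power_add mult_ac)
  qed
  also have "\<dots> = b2 ^ Suc k * (\<Prod>i<Suc k. 1 - q ^ (Suc k - i)) * qpoch (q ^ k * z) q (Suc k)
      / (\<Prod>i<Suc k. q ^ Suc k)"
    by (simp only: prod.distrib prod_dividef prod_constant card_lessThan qpoch_def)
  also have "(\<Prod>i<Suc k. 1 - q ^ (Suc k - i)) = (\<Prod>i<Suc k. 1 - q ^ (Suc k - Suc i) * q)"
    by (intro prod.cong) (auto simp: Suc_diff_le mult.commute)
  also have "\<dots> = qpoch q q (Suc k)"
    unfolding qpoch_def by (rule prod.nat_diff_reindex)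
  also have "(\<Prod>i<Suc k. q ^ Suc k) = q ^ (Suc k * Suc k)"
    by (simp only: prod_constant card_lessThan power_mult)
  finally show ?thesis .
qed

lemma psi_coeff_diag:
  "psi_coeff q z (Suc k) (Suc k) = vder q b0 b1 b2 (Suc k) 0 / vder q b0 b1 b2 (Suc k) (Suc k)"
proof -
  let ?K = "Suc k" and ?C = "Suc k choose 2"
  have Q: "qpoch q q ?K \<noteq> 0" using qpoch_qpow_nonzero[of 0] by simp
  have "psi_coeff q z ?K ?K = (- 1) ^ ?K * q ^ ?C * qpoch z q ?K / qpoch (q ^ k * z) q ?K"
    using Q qpoch_qpow_z_nonzero[of "Suc k"] qpow_mult_z_ne_1[of k]
    by (intro psi_coeff_diag_closed) simp_all
  also have "\<dots> = vder q b0 b1 b2 ?K 0 / vder q b0 b1 b2 ?K ?K"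
  proof -
    have cancel: "s * R * Z / W = (s * B * Q * Z / P) / (B * Q * W / (P * R))"
      if "B \<noteq> 0" "P \<noteq> 0" "Q \<noteq> 0" "R \<noteq> 0" for s B P Q R Z W :: complex
      using that by (simp add: field_simps)
    have qKK: "q ^ (?K * ?K) = q ^ (?K + ?C) * q ^ ?C"
      by (simp only: square_eq_add_choose_two[of ?K] mult_2 power_add mult.assoc)
    show ?thesis
      unfolding vder_at_0 vder_diag qKK power_minus[of b2]
      by (rule cancel) (simp_all add: Q q_nonzero b2_nonzero)
  qed
  finally show ?thesis .
qed

lemma psi_coeff_eq_vder_ratio:
  assumes "1 \<le> k" "k \<le> j"
  shows "psi_coeff q z k j = vder q b0 b1 b2 j 0 / vder q b0 b1 b2 j k"
  using assms(2)
proof (induction j rule: dec_induct)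
  case base
  from assms(1) obtain k' where "k = Suc k'" by (cases k) auto
  then show ?case by (simp only: psi_coeff_diag)
next
  case (step j)
  define c A B where "c = - b2 / q ^ Suc j"
    and "A = (1 - q ^ Suc j) * (1 - q ^ j * z)"
    and "B = (1 - q ^ (Suc j - k)) * (1 - q ^ (j + k) * z)"
  have "c \<noteq> 0" using q_nonzero b2_nonzero by (simp add: c_def)
  have "B \<noteq> 0"
    using qpow_Suc_ne_1[of "j - k"] qpow_mult_z_ne_1[of "j + k"] step.hyps(1)
    by (simp add: B_def Suc_diff_le)
  have x0: "x 0 - x (Suc j) = c * A"
    using xx_diff[OF q_nonzero b2_nonzero, of 0 j] by (simp add: c_def A_def)
  have xk: "x k - x (Suc j) = c * B"
    using xx_diff[OF q_nonzero b2_nonzero, of k j] step.hyps(1) by (simp add: c_def B_def)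
  have "psi_coeff q z k (Suc j) * B = psi_coeff q z k j * A"
    unfolding A_def B_def by (intro psi_coeff_Suc step.hyps(1) qpoch_qpow_z_nonzero)
  then have "psi_coeff q z k (Suc j) = psi_coeff q z k j * (c * A) / (c * B)"
    using \<open>c \<noteq> 0\<close> \<open>B \<noteq> 0\<close> by (simp add: eq_divide_eq)
  also have "\<dots> = vder q b0 b1 b2 j 0 * (x 0 - x (Suc j)) / (vder q b0 b1 b2 j k * (x k - x (Suc j)))"
    unfolding step.IH x0 xk by simp
  also have "\<dots> = vder q b0 b1 b2 (Suc j) 0 / vder q b0 b1 b2 (Suc j) k"
    using step.hyps(1) by (simp add: vder_Suc)
  finally show ?case .
qed

end

theorem mainTheorem5:
  fixes q a1 a2 b0 b1 b2 s1 s2 :: complex and k :: nat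
  assumes "q \<noteq> 0" and "norm q \<noteq> 1"
    and "a2 \<noteq> 0" and "b2 \<noteq> 0"
    and "inj (hh q a1 a2)"
    and "inj (xx q b0 b1 b2)"
    and "k \<ge> 1"
  shows "ff q a1 a2 b0 b1 b2 s1 s2 k
           = hadamard (ff q a1 a2 b0 b1 b2 s1 s2 0) (psi q (q * b1 / b2) k)"
proof (rule fps_ext)
  fix j
  show "fps_nth (ff q a1 a2 b0 b1 b2 s1 s2 k) j
      = fps_nth (hadamard (ff q a1 a2 b0 b1 b2 s1 s2 0) (psi q (q * b1 / b2) k)) j"
  proof (cases "k \<le> j")
    case True
    have "rho q a1 a2 b0 b1 b2 s1 s2 k j
        = rho q a1 a2 b0 b1 b2 s1 s2 0 j * (vder q b0 b1 b2 j 0 / vder q b0 b1 b2 j k)"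
      using vder_nonzero[OF assms(6)] by (simp add: rho_def)
    with True show ?thesis
      by (simp add: ff_def hadamard_def fps_nth_psi psi_coeff_eq_vder_ratio[OF assms(1,4,6,7) True])
  qed (simp add: ff_def hadamard_def fps_nth_psi)
qed

end
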